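(* Let $n\ge 1$ and let $U,V$ be $2^n\times 2^n$ unitary matrices that are functionally distinct, i.e. there is no $\theta\in\mathbb{R}$ with $V=e^{i\theta}U$. Then there exists at least one local quantum stimulus $\ket{l}=\ket{l_{n-1}}\otimes\cdots\otimes\ket{l_0}$, with each $\ket{l_j}\in\{\ket{0},\ket{1},\ket{+},\ket{-},\ket{\uparrow},\ket{\downarrow}\}$, such that $\mathcal{F}(U\ket{l},V\ket{l})\neq 1$.
   Context: Single-qubit states: $\ket{0},\ket{1}$ are the computational basis vectors of $\mathbb{C}^2$, $\ket{\pm}=\tfrac{1}{\sqrt2}(\ket{0}\pm\ket{1})$, $\ket{\uparrow}=\tfrac{1}{\sqrt2}(\ket{0}+i\ket{1})$, $\ket{\downarrow}=\tfrac{1}{\sqrt2}(\ket{0}-i\ket{1})$. The $6^n$ tensor products $\ket{l_{n-1}}\otimes\cdots\otimes\ket{l_0}$ of such states are the local quantum stimuli in $(\mathbb{C}^2)^{\otimes n}\cong\mathbb{C}^{2^n}$. For unit vectors $\ket{\psi},\ket{\phi}$, the fidelity is $\mathcal{F}(\ket{\psi},\ket{\phi})=|\langle\psi|\phi\rangle|^2\in[0,1]$. *)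

theory Defs
  imports "Jordan_Normal_Form.Matrix" "Jordan_Normal_Form.Conjugate"
begin

(* Unitary n x n complex matrix: U^dagger U = I  (square, so also U U^dagger = I) *)
definition adjoint_mat :: "complex mat \<Rightarrow> complex mat" where
  "adjoint_mat A = mat (dim_col A) (dim_row A) (\<lambda>(i,j). cnj (A $$ (j,i)))"

definition unitary_mat :: "nat \<Rightarrow> complex mat \<Rightarrow> bool" where
  "unitary_mat N U \<longleftrightarrow> U \<in> carrier_mat N N \<and> adjoint_mat U * U = 1\<^sub>m N"

definition single_qubit_stimuli :: "complex vec set" where
  "single_qubit_stimuli =
     { vec_of_list [1, 0], vec_of_list [0, 1],
       vec_of_list [1 / complex_of_real (sqrt 2), 1 / complex_of_real (sqrt 2)],
       vec_of_list [1 / complex_of_real (sqrt 2), - 1 / complex_of_real (sqrt 2)],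
       vec_of_list [1 / complex_of_real (sqrt 2), \<i> / complex_of_real (sqrt 2)],
       vec_of_list [1 / complex_of_real (sqrt 2), - \<i> / complex_of_real (sqrt 2)] }"

(* |l_{n-1}> \<otimes> ... \<otimes> |l_0> in C^(2^n): the computational basis index k has
   binary digits b_{n-1} ... b_0 (b_j = bit j of k), and the amplitude is
   prod_j <b_j | l_j>. *)
definition tensor_state :: "nat \<Rightarrow> (nat \<Rightarrow> complex vec) \<Rightarrow> complex vec" where
  "tensor_state n l = vec (2 ^ n) (\<lambda>k. \<Prod>j<n. l j $ ((k div 2 ^ j) mod 2))"

definition local_stimulus :: "nat \<Rightarrow> complex vec \<Rightarrow> bool" where
  "local_stimulus n v \<longleftrightarrow>
     (\<exists>l. (\<forall>j<n. l j \<in> single_qubit_stimuli) \<and> v = tensor_state n l)"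

definition braket :: "complex vec \<Rightarrow> complex vec \<Rightarrow> complex" where
  "braket psi phi = (\<Sum>i<dim_vec psi. cnj (psi $ i) * phi $ i)"

definition fidelity :: "complex vec \<Rightarrow> complex vec \<Rightarrow> real" where
  "fidelity psi phi = (cmod (braket psi phi))\<^sup>2"

end

theory Submission
  imports Defs "Jordan_Normal_Form.Determinant"
begin

text \<open>Let \<open>M = U\<^sup>\<dagger> V\<close>. If \<open>U l\<close> and \<open>V l\<close> have fidelity 1 for a unit vector \<open>l\<close>, the
  equality case of Cauchy--Schwarz makes \<open>l\<close> an eigenvector of \<open>M\<close> with a unimodular eigenvalue.
  The computational basis states are local stimuli, so \<open>M\<close> is diagonal; the stimulus
  \<open>|+\<rangle> \<otimes> \<dots> \<otimes> |+\<rangle>\<close> has all amplitudes equal, so all diagonal entries coincide. Hence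
  \<open>M = e\<^sup>i\<^sup>\<theta> I\<close>, i.e. \<open>V = e\<^sup>i\<^sup>\<theta> U\<close>.\<close>

lemma adjoint_mat_carrier: "A \<in> carrier_mat N N \<Longrightarrow> adjoint_mat A \<in> carrier_mat N N"
  by (simp add: adjoint_mat_def)

lemma braket_mult_mat_vec_left:
  assumes A: "A \<in> carrier_mat N N" and x: "x \<in> carrier_vec N" and w: "w \<in> carrier_vec N"
  shows "braket (A *\<^sub>v x) w = braket x (adjoint_mat A *\<^sub>v w)"
proof -
  have "braket (A *\<^sub>v x) w = (\<Sum>i<N. \<Sum>j<N. cnj (A $$ (i,j)) * cnj (x $ j) * w $ i)"
    using A x w
    by (auto simp: braket_def scalar_prod_def lessThan_atLeast0 sum_distrib_right sum_distrib_left
         intro!: sum.cong)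
  also have "\<dots> = (\<Sum>j<N. \<Sum>i<N. cnj (A $$ (i,j)) * cnj (x $ j) * w $ i)"
    by (rule sum.swap)
  also have "\<dots> = braket x (adjoint_mat A *\<^sub>v w)"
    using A x w
    by (auto simp: braket_def scalar_prod_def adjoint_mat_def lessThan_atLeast0 sum_distrib_left
         intro!: sum.cong)
  finally show ?thesis .
qed

lemma braket_unitary_mult_mat_vec:
  assumes U: "unitary_mat N U" and x: "x \<in> carrier_vec N" and y: "y \<in> carrier_vec N"
  shows "braket (U *\<^sub>v x) (U *\<^sub>v y) = braket x y"
proof -
  have Uc: "U \<in> carrier_mat N N" and UU: "adjoint_mat U * U = 1\<^sub>m N"
    using U by (simp_all add: unitary_mat_def)
  have "braket (U *\<^sub>v x) (U *\<^sub>v y) = braket x (adjoint_mat U *\<^sub>v (U *\<^sub>v y))"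
    using Uc x y by (simp add: braket_mult_mat_vec_left)
  also have "adjoint_mat U *\<^sub>v (U *\<^sub>v y) = y"
    using assoc_mult_mat_vec[OF adjoint_mat_carrier[OF Uc] Uc y] UU y by simp
  finally show ?thesis .
qed

lemma braket_self_eq_0_iff:
  assumes "d \<in> carrier_vec N"
  shows "braket d d = 0 \<longleftrightarrow> d = 0\<^sub>v N"
proof
  assume "braket d d = 0"
  moreover have "braket d d = complex_of_real (\<Sum>i<N. (cmod (d $ i))\<^sup>2)"
    using assms unfolding braket_def of_real_sum
    by (intro sum.cong) (use assms in simp, simp only: complex_norm_square mult.commute)
  ultimately have "(\<Sum>i<N. (cmod (d $ i))\<^sup>2) = 0" by (metis of_real_eq_0_iff)
  then have "\<forall>i<N. d $ i = 0" by (simp add: sum_nonneg_eq_0_iff)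
  then show "d = 0\<^sub>v N" using assms by (intro eq_vecI) auto
qed (simp add: braket_def)

text \<open>Equality case of Cauchy--Schwarz: expanding \<open>\<langle>d|d\<rangle>\<close> for \<open>d = y - \<langle>x|y\<rangle> x\<close>
  gives \<open>1 - |\<langle>x|y\<rangle>|\<^sup>2 = 0\<close>.\<close>
lemma braket_norm_1_imp_eq_scalar:
  assumes x: "x \<in> carrier_vec N" and y: "y \<in> carrier_vec N"
    and xx: "braket x x = 1" and yy: "braket y y = 1" and xy: "cmod (braket x y) = 1"
  shows "y = braket x y \<cdot>\<^sub>v x"
proof -
  define c where "c = braket x y"
  define d where "d = y - c \<cdot>\<^sub>v x"
  have d: "d \<in> carrier_vec N" using x y by (simp add: d_def)
  have yx: "braket y x = cnj c"
    using x y by (simp add: c_def braket_def mult.commute)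
  have "braket d d = braket y y - c * braket y x - cnj c * braket x y + c * cnj c * braket x x"
    using x y by (simp add: d_def braket_def algebra_simps sum.distrib sum_subtractf sum_distrib_left)
  also have "\<dots> = 1 - c * cnj c" using xx yy yx by (simp add: c_def)
  also have "c * cnj c = 1" using xy by (simp add: c_def complex_mult_cnj cmod_def)
  finally have "d = 0\<^sub>v N" using braket_self_eq_0_iff[OF d] by simp
  then have "y $ i = c * x $ i" if "i < N" for i
  proof -
    have "d $ i = 0" using \<open>d = 0\<^sub>v N\<close> that by simp
    then show ?thesis using that x y by (simp add: d_def)
  qed
  then show ?thesis using x y by (intro eq_vecI) (auto simp: c_def)
qed

lemma fidelity_1_imp_eigenvector:
  assumes U: "unitary_mat N U" and V: "unitary_mat N V" and l: "l \<in> carrier_vec N"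
    and ll: "braket l l = 1" and f: "fidelity (U *\<^sub>v l) (V *\<^sub>v l) = 1"
  shows "\<exists>c. cmod c = 1 \<and> (adjoint_mat U * V) *\<^sub>v l = c \<cdot>\<^sub>v l"
proof -
  have Uc: "U \<in> carrier_mat N N" and Vc: "V \<in> carrier_mat N N"
    using U V by (auto simp: unitary_mat_def)
  have aUc: "adjoint_mat U \<in> carrier_mat N N" using Uc by (rule adjoint_mat_carrier)
  define c where "c = braket (U *\<^sub>v l) (V *\<^sub>v l)"
  have xx: "braket (U *\<^sub>v l) (U *\<^sub>v l) = 1" and yy: "braket (V *\<^sub>v l) (V *\<^sub>v l) = 1"
    using braket_unitary_mult_mat_vec[OF U l l] braket_unitary_mult_mat_vec[OF V l l] ll
    by simp_all
  have "(cmod c)\<^sup>2 = 1" using f by (simp add: fidelity_def c_def)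
  then have c: "cmod c = 1" using norm_ge_zero[of c] by (auto simp: power2_eq_1_iff)
  have "V *\<^sub>v l = c \<cdot>\<^sub>v (U *\<^sub>v l)"
    unfolding c_def using Uc Vc l xx yy c by (intro braket_norm_1_imp_eq_scalar[of _ N]) (auto simp: c_def)
  then have "(adjoint_mat U * V) *\<^sub>v l = c \<cdot>\<^sub>v ((adjoint_mat U * U) *\<^sub>v l)"
    using aUc Uc Vc l by (simp add: assoc_mult_mat_vec mult_mat_vec)
  then show ?thesis using c U l by (auto simp: unitary_mat_def)
qed

lemma eigenvectors_imp_scalar_mat:
  fixes M :: "'a :: idom mat"
  assumes M: "M \<in> carrier_mat N N"
    and basis: "\<And>k. k < N \<Longrightarrow> \<exists>c. M *\<^sub>v unit_vec N k = c \<cdot>\<^sub>v unit_vec N k"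
    and s: "s \<noteq> 0" and uniform: "M *\<^sub>v vec N (\<lambda>_. s) = c \<cdot>\<^sub>v vec N (\<lambda>_. s)"
  shows "M = c \<cdot>\<^sub>m 1\<^sub>m N"
proof -
  have offdiag: "M $$ (i, k) = 0" if "i < N" "k < N" "i \<noteq> k" for i k
  proof -
    obtain c' where "M *\<^sub>v unit_vec N k = c' \<cdot>\<^sub>v unit_vec N k" using basis \<open>k < N\<close> by blast
    then have "(M *\<^sub>v unit_vec N k) $ i = 0" using that by simp
    moreover have "(M *\<^sub>v unit_vec N k) $ i = M $$ (i, k)" using M that by simp
    ultimately show ?thesis by simp
  qed
  have diag: "M $$ (i, i) = c" if i: "i < N" for i
  proof -
    have "(M *\<^sub>v vec N (\<lambda>_. s)) $ i = (\<Sum>k\<in>{0..<N}. M $$ (i, k) * s)"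
      using M i by (simp add: scalar_prod_def)
    also have "\<dots> = (\<Sum>k\<in>{0..<N}. if k = i then M $$ (i, k) * s else 0)"
      using i offdiag by (intro sum.cong) auto
    finally have "(M *\<^sub>v vec N (\<lambda>_. s)) $ i = M $$ (i, i) * s" using i by simp
    moreover have "(M *\<^sub>v vec N (\<lambda>_. s)) $ i = c * s" using uniform i by simp
    ultimately show ?thesis using mult_right_cancel[OF s] by metis
  qed
  show ?thesis
    by (rule eq_matI) (use M offdiag diag in auto)
qed

lemma nat_eq_if_binary_digits_eq:
  fixes m k :: nat
  assumes "m < 2 ^ n" "k < 2 ^ n" "\<And>j. j < n \<Longrightarrow> m div 2 ^ j mod 2 = k div 2 ^ j mod 2"
  shows "m = k"
proof (rule bit_eqI)
  fix j
  have "m = take_bit n m" "k = take_bit n k"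
    using assms by (simp_all add: take_bit_nat_eq_self)
  moreover have "bit m j = bit k j" if "j < n"
    using assms(3)[OF that] by (simp add: bit_iff_odd odd_iff_mod_2_eq_one)
  ultimately show "bit m j = bit k j"
    by (metis bit_take_bit_iff)
qed

definition binary_qubits :: "nat \<Rightarrow> nat \<Rightarrow> complex vec" where
  "binary_qubits k j = (if k div 2 ^ j mod 2 = 0 then vec_of_list [1, 0] else vec_of_list [0, 1])"

lemma tensor_state_binary_qubits:
  assumes k: "k < 2 ^ n"
  shows "tensor_state n (binary_qubits k) = unit_vec (2 ^ n) k"
proof (rule eq_vecI)
  fix m assume "m < dim_vec (unit_vec (2 ^ n) k)"
  then have m: "m < 2 ^ n" by simp
  have entry: "binary_qubits k j $ (m div 2 ^ j mod 2) =
      (if m div 2 ^ j mod 2 = k div 2 ^ j mod 2 then 1 else 0)" for j m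
    by (cases "m div 2 ^ j mod 2 = 0") (auto simp: binary_qubits_def mod2_eq_if)
  show "tensor_state n (binary_qubits k) $ m = unit_vec (2 ^ n) k $ m"
  proof (cases "m = k")
    case False
    then obtain j where "j < n" "m div 2 ^ j mod 2 \<noteq> k div 2 ^ j mod 2"
      using nat_eq_if_binary_digits_eq[OF m k] by blast
    then show ?thesis using m k False by (auto simp: tensor_state_def entry intro: prod_zero)
  qed (use m in \<open>simp add: tensor_state_def entry\<close>)
qed (simp add: tensor_state_def)

lemma local_stimulus_unit_vec: "k < 2 ^ n \<Longrightarrow> local_stimulus n (unit_vec (2 ^ n) k)"
  unfolding local_stimulus_def
  by (intro exI[of _ "binary_qubits k"])
     (simp add: tensor_state_binary_qubits binary_qubits_def single_qubit_stimuli_def)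

lemma local_stimulus_uniform:
  "local_stimulus n (vec (2 ^ n) (\<lambda>_. (1 / complex_of_real (sqrt 2)) ^ n))"
proof -
  define plus :: "complex vec"
    where "plus = vec_of_list [1 / complex_of_real (sqrt 2), 1 / complex_of_real (sqrt 2)]"
  have "plus $ (k div 2 ^ j mod 2) = 1 / complex_of_real (sqrt 2)" for k j
    by (cases "k div 2 ^ j mod 2 = 0") (auto simp: plus_def mod2_eq_if)
  then have "tensor_state n (\<lambda>_. plus) = vec (2 ^ n) (\<lambda>_. (1 / complex_of_real (sqrt 2)) ^ n)"
    by (simp add: tensor_state_def)
  moreover have "plus \<in> single_qubit_stimuli"
    by (simp add: plus_def single_qubit_stimuli_def)
  ultimately show ?thesis
    unfolding local_stimulus_def by (metis (full_types))
qed

lemma braket_unit_vec: "k < N \<Longrightarrow> braket (unit_vec N k) (unit_vec N k) = 1"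
  unfolding braket_def by (simp add: sum.delta if_distrib cong: if_cong)

lemma braket_uniform:
  "braket (vec (2 ^ n) (\<lambda>_. (1 / complex_of_real (sqrt 2)) ^ n))
          (vec (2 ^ n) (\<lambda>_. (1 / complex_of_real (sqrt 2)) ^ n)) = 1"
proof -
  have "cnj ((1 / complex_of_real (sqrt 2)) ^ n) * (1 / complex_of_real (sqrt 2)) ^ n = (1 / 2) ^ n"
    by (simp add: power_mult_distrib[symmetric] power_divide flip: of_real_mult)
  then show ?thesis
    by (simp add: braket_def power_divide)
qed

lemma unimodular_eq_exp:
  fixes d :: complex
  assumes "cmod d = 1"
  shows "\<exists>\<theta>::real. d = exp (\<i> * complex_of_real \<theta>)"
proof -
  obtain t where "d = Complex (cos t) (sin t)" using complex_unimodular_polar[OF assms] by blast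
  then show ?thesis by (auto simp: cis.ctr cis_conv_exp[symmetric])
qed

theorem theorem1:
  fixes n :: nat and U V :: "complex mat"
  assumes "n \<ge> 1"
    and "unitary_mat (2 ^ n) U"
    and "unitary_mat (2 ^ n) V"
    and "\<not> (\<exists>\<theta>::real. V = exp (\<i> * complex_of_real \<theta>) \<cdot>\<^sub>m U)"
  shows "\<exists>l. local_stimulus n l \<and> fidelity (U *\<^sub>v l) (V *\<^sub>v l) \<noteq> 1"
proof (rule ccontr)
  assume "\<not> ?thesis"
  then have F: "\<And>l. local_stimulus n l \<Longrightarrow> fidelity (U *\<^sub>v l) (V *\<^sub>v l) = 1" by blast
  define N where "N = (2::nat) ^ n"
  define M where "M = adjoint_mat U * V"
  define s where "s = (1 / complex_of_real (sqrt 2)) ^ n"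
  have U: "unitary_mat N U" and V: "unitary_mat N V" using assms by (simp_all add: N_def)
  then have Uc: "U \<in> carrier_mat N N" and Vc: "V \<in> carrier_mat N N" and UU: "adjoint_mat U * U = 1\<^sub>m N"
    by (simp_all add: unitary_mat_def)
  have eigen: "\<exists>c. cmod c = 1 \<and> M *\<^sub>v l = c \<cdot>\<^sub>v l"
    if "local_stimulus n l" "l \<in> carrier_vec N" "braket l l = 1" for l
    unfolding M_def using fidelity_1_imp_eigenvector[OF U V] F that by blast
  obtain c where c: "cmod c = 1" and "M *\<^sub>v vec N (\<lambda>_. s) = c \<cdot>\<^sub>v vec N (\<lambda>_. s)"
    using eigen[of "vec N (\<lambda>_. s)"] local_stimulus_uniform braket_uniform by (auto simp: N_def s_def)
  moreover have "\<exists>c. M *\<^sub>v unit_vec N k = c \<cdot>\<^sub>v unit_vec N k" if "k < N" for k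
    using eigen[of "unit_vec N k"] local_stimulus_unit_vec braket_unit_vec that by (auto simp: N_def)
  ultimately have M: "M = c \<cdot>\<^sub>m 1\<^sub>m N"
    using Uc Vc by (intro eigenvectors_imp_scalar_mat)
      (auto simp: M_def s_def intro: mult_carrier_mat adjoint_mat_carrier)
  have "U * adjoint_mat U = 1\<^sub>m N"
    using mat_mult_left_right_inverse[OF adjoint_mat_carrier[OF Uc] Uc UU] .
  then have "V = U * M"
    using Uc Vc by (simp add: M_def assoc_mult_mat[OF Uc adjoint_mat_carrier[OF Uc] Vc, symmetric])
  also have "\<dots> = c \<cdot>\<^sub>m U" using Uc by (simp add: M mult_smult_distrib[OF Uc one_carrier_mat])
  finally show False using unimodular_eq_exp[OF c] assms(4) by blast
qed

end
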